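(* Let $P$ be a generic regular hexagon in $\mathbb{R}^3$, $u_1,\ldots,u_6$ a support system of $P$, and $P'=B_1\ldots B_6$ the derived hexagon, $\overline{OB_i}=u_i$. Assume $B_1,B_3,B_5$ are not collinear and let $\Pi_1$ be the plane through them. Then $B_2,B_4,B_6$ lie in one open half-space (or all on $\Pi_1$) at equal distance from $\Pi_1$, so they lie in a plane $\Pi_2$ parallel to $\Pi_1$ (or equal to it). Moreover, if $B'_2,B'_4,B'_6$ denote the orthogonal projections of $B_2,B_4,B_6$ onto $\Pi_1$, then the plane hexagon $B_1B'_2B_3B'_4B_5B'_6$ has oriented area $0$.
   Context: Indices are cyclic mod $6$; $[\cdot,\cdot]$ is the cross product. For a closed hexagon $A_1\ldots A_6$ put $v_1=\overline{A_1A_2},\ldots,v_6=\overline{A_6A_1}$. The hexagon is generic if any two consecutive $v_i,v_{i+1}$ are not collinear and any three consecutive $v_i,v_{i+1},v_{i+2}$ are not coplanar. A support system is a tuple $u_1,\ldots,u_6$ with $[u_i,u_{i+1}]=v_{i+1}$ for all $i$; a generic hexagon is regular if it has a support system. The derived hexagon for a support system is $B_1\ldots B_6$ with $\overline{OB_i}=u_i$ for a fixed origin $O$. A closed polygon $C_1\ldots C_n$ has oriented area $0$ if $\sum_i[\overline{OC_i},\overline{OC_{i+1}}]=0$ (independent of $O$); for a plane polygon this means its signed area in its plane is zero. *)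

theory Defs
  imports "HOL-Analysis.Analysis" "HOL-Analysis.Cross3"
begin

text \<open>Hexagons are given by 0-based vertex functions on nat, read cyclically mod 6.
  Paper index k (1..6) corresponds to index k-1 here.\<close>

definition side :: "(nat \<Rightarrow> real^3) \<Rightarrow> nat \<Rightarrow> real^3" where
  "side A i = A (Suc i mod 6) - A (i mod 6)"

definition generic_hexagon :: "(nat \<Rightarrow> real^3) \<Rightarrow> bool" where
  "generic_hexagon A \<longleftrightarrow>
     (\<forall>i. \<not> collinear {0, side A i, side A (Suc i)}) \<and>
     (\<forall>i. \<not> coplanar {0, side A i, side A (Suc i), side A (Suc (Suc i))})"

definition support_system :: "(nat \<Rightarrow> real^3) \<Rightarrow> (nat \<Rightarrow> real^3) \<Rightarrow> bool" where
  "support_system A u \<longleftrightarrow>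
     (\<forall>i. cross3 (u (i mod 6)) (u (Suc i mod 6)) = side A (Suc i))"

definition regular_hexagon :: "(nat \<Rightarrow> real^3) \<Rightarrow> bool" where
  "regular_hexagon A \<longleftrightarrow> generic_hexagon A \<and> (\<exists>u. support_system A u)"

definition derived_hexagon :: "real^3 \<Rightarrow> (nat \<Rightarrow> real^3) \<Rightarrow> nat \<Rightarrow> real^3" where
  "derived_hexagon Og u i = Og + u (i mod 6)"

text \<open>Oriented area zero of a closed n-gon (origin taken at 0; the sum is independent of it).\<close>
definition oriented_area_zero :: "nat \<Rightarrow> (nat \<Rightarrow> real^3) \<Rightarrow> bool" where
  "oriented_area_zero n C \<longleftrightarrow> (\<Sum>i<n. cross3 (C (i mod n)) (C (Suc i mod n))) = 0"

end

theory Submission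
  imports Defs
begin

text \<open>The sides of a closed hexagon sum to zero, so the support relations
  [u_i, u_(i+1)] = v_(i+1) say that the area vector of u, the sum of the [u_i, u_(i+1)],
  vanishes; the area vector is invariant under translation, so the same holds for the
  derived hexagon B. For any hexagon b_0 ... b_5, with n the normal of the triangle
  b_0 b_2 b_4, the numbers n . (b_1 - b_3) and n . (b_3 - b_5) are the products of the
  area vector with b_4 - b_0 and b_0 - b_2. Hence the odd vertices have the same signed
  height over the plane of the even ones, and projecting them onto that plane subtracts
  one and the same vector m. Subtracting a common vector from the odd vertices does not
  change the area vector, because the new terms -[b_2k, m] and [b_(2k+2), m] cancel
  around the cycle.\<close>

lemma oriented_area_zero_cong:
  assumes "\<And>i. i < n \<Longrightarrow> C i = D i"
  shows "oriented_area_zero n C \<longleftrightarrow> oriented_area_zero n D"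
  unfolding oriented_area_zero_def
  by (intro arg_cong[where f = "\<lambda>s. s = 0"] sum.cong) (auto simp: assms)

lemma sum_mod_Suc_reindex:
  "(\<Sum>i<n. f (Suc i mod n)) = (\<Sum>i<n. f (i mod n))"
proof (cases n)
  case (Suc m)
  have "(\<Sum>i<n. f (Suc i mod n)) = (\<Sum>i<m. f (Suc i)) + f 0"
    using Suc by (simp add: sum.lessThan_Suc)
  also have "\<dots> = (\<Sum>i<n. f i)"
    using Suc by (simp only: sum.lessThan_Suc_shift add.commute)
  also have "\<dots> = (\<Sum>i<n. f (i mod n))"
    by simp
  finally show ?thesis .
qed simp

lemma cross3_sum_right: "cross3 c (sum b I) = (\<Sum>i\<in>I. cross3 c (b i))"
  by (induction I rule: infinite_finite_induct) (simp_all add: cross_add_right)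

lemma sum_cross3_translate:
  "(\<Sum>i\<in>I. cross3 (c + a i) (c + b i))
     = cross3 c (sum b I - sum a I) + (\<Sum>i\<in>I. cross3 (a i) (b i))"
  by (simp add: cross_add_left cross_add_right Cross3.right_diff_distrib cross3_sum_right
      sum.distrib sum_subtractf cross_skew[of _ c])

lemma oriented_area_zero_translate:
  "oriented_area_zero n (\<lambda>i. c + C i) \<longleftrightarrow> oriented_area_zero n C"
  unfolding oriented_area_zero_def sum_cross3_translate sum_mod_Suc_reindex by simp

lemma sum_side_eq_0: "(\<Sum>i<6. side A i) = 0"
  using sum_lessThan_telescope[of "\<lambda>i. A (i mod 6)" 6] by (simp add: side_def)

lemma side_mod [simp]: "side A (i mod 6) = side A i"
  by (simp add: side_def mod_Suc_eq)

lemma support_system_oriented_area_zero: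
  assumes "support_system A u"
  shows "oriented_area_zero 6 u"
proof -
  have "(\<Sum>i<6. cross3 (u (i mod 6)) (u (Suc i mod 6))) = (\<Sum>i<6. side A (Suc i))"
    by (simp only: assms[unfolded support_system_def, rule_format])
  also have "\<dots> = (\<Sum>i<6. side A (Suc i mod 6))"
    by simp
  also have "\<dots> = 0"
    unfolding sum_mod_Suc_reindex by (simp add: sum_side_eq_0)
  finally show ?thesis
    unfolding oriented_area_zero_def .
qed

lemma derived_hexagon_oriented_area_zero:
  assumes "support_system A u"
  shows "oriented_area_zero 6 (derived_hexagon Og u)"
proof -
  have "oriented_area_zero 6 (\<lambda>i. u (i mod 6))"
    using support_system_oriented_area_zero[OF assms] by (subst oriented_area_zero_cong) simp_all
  then show ?thesis
    unfolding derived_hexagon_def oriented_area_zero_translate .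
qed

lemma oriented_area_zero_6_iff:
  "oriented_area_zero 6 C \<longleftrightarrow>
     cross3 (C 0) (C 1) + cross3 (C 1) (C 2) + cross3 (C 2) (C 3) + cross3 (C 3) (C 4)
     + cross3 (C 4) (C 5) + cross3 (C 5) (C 0) = 0"
proof -
  have "{..<6::nat} = {0, 1, 2, 3, 4, 5}"
    by auto
  \<comment> \<open>with \<open>One_nat_def\<close> the index \<open>Suc 1\<close> would become \<open>Suc (Suc 0)\<close> instead of \<open>2\<close>\<close>
  then show ?thesis
    by (simp add: oriented_area_zero_def add.assoc del: One_nat_def)
qed

lemma oriented_area_zero_6_shift_odd:
  "oriented_area_zero 6 (\<lambda>i. if even i then C i else C i - m) \<longleftrightarrow> oriented_area_zero 6 C"
  unfolding oriented_area_zero_6_iff by (simp add: cross3_simps)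

lemma hexagon_odd_vertices_same_height:
  fixes b :: "nat \<Rightarrow> real^3"
  defines "n \<equiv> cross3 (b 2 - b 0) (b 4 - b 0)"
  assumes "oriented_area_zero 6 b" and "j \<in> {1, 3, 5}"
  shows "n \<bullet> (b j - b 0) = n \<bullet> (b 1 - b 0)"
proof -
  let ?S = "cross3 (b 0) (b 1) + cross3 (b 1) (b 2) + cross3 (b 2) (b 3) + cross3 (b 3) (b 4)
     + cross3 (b 4) (b 5) + cross3 (b 5) (b 0)"
  have "?S = 0"
    using assms(2) by (simp add: oriented_area_zero_6_iff)
  moreover have "n \<bullet> (b 1 - b 3) = ?S \<bullet> (b 4 - b 0)"
    and "n \<bullet> (b 3 - b 5) = ?S \<bullet> (b 0 - b 2)"
    unfolding n_def by (simp_all add: cross3_def inner_vec_def sum_3 algebra_simps)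
  ultimately show ?thesis
    using assms(3) by (auto simp: inner_diff_right)
qed

lemma cross3_diff_eq_0_iff_collinear:
  "cross3 (q - p) (r - p) = 0 \<longleftrightarrow> collinear {p, q, r}"
proof -
  have "collinear {q, p, r} \<longleftrightarrow> collinear {0, q - p, r - p}"
    by (rule collinear_3) (simp add: NO_MATCH_def)
  then show ?thesis
    by (simp add: cross_eq_0 insert_commute)
qed

lemma cross3_reciprocal_decomposition:
  fixes a b w :: "real^3"
  defines "n \<equiv> cross3 a b"
  shows "(n \<bullet> n) *\<^sub>R w = (w \<bullet> cross3 b n) *\<^sub>R a + (w \<bullet> cross3 n a) *\<^sub>R b + (w \<bullet> n) *\<^sub>R n"
  unfolding n_def by (simp add: cross3_def inner_vec_def sum_3 vec_eq_iff forall_3 algebra_simps)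

lemma mem_affine_hull_3_iff_cross3:
  fixes p q r x :: "real^3"
  defines "n \<equiv> cross3 (q - p) (r - p)"
  assumes "n \<noteq> 0"
  shows "x \<in> affine hull {p, q, r} \<longleftrightarrow> n \<bullet> (x - p) = 0"
proof
  assume "x \<in> affine hull {p, q, r}"
  then obtain a b c where "x = a *\<^sub>R p + b *\<^sub>R q + c *\<^sub>R r" "a + b + c = 1"
    unfolding affine_hull_3 by blast
  then have "x - p = b *\<^sub>R (q - p) + c *\<^sub>R (r - p)"
    by (simp add: algebra_simps flip: scaleR_add_left)
  then show "n \<bullet> (x - p) = 0"
    unfolding n_def by (simp add: inner_add_right dot_cross_self)
next
  assume "n \<bullet> (x - p) = 0"
  define s where "s = ((x - p) \<bullet> cross3 (r - p) n) / (n \<bullet> n)"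
  define t where "t = ((x - p) \<bullet> cross3 n (q - p)) / (n \<bullet> n)"
  have "n \<bullet> n \<noteq> 0"
    using assms(2) by simp
  have "(n \<bullet> n) *\<^sub>R (x - p)
      = ((x - p) \<bullet> cross3 (r - p) n) *\<^sub>R (q - p) + ((x - p) \<bullet> cross3 n (q - p)) *\<^sub>R (r - p)"
    using cross3_reciprocal_decomposition[of "q - p" "r - p" "x - p"] \<open>n \<bullet> (x - p) = 0\<close>
    unfolding n_def by (simp add: inner_commute)
  then have "x - p = inverse (n \<bullet> n) *\<^sub>R
      (((x - p) \<bullet> cross3 (r - p) n) *\<^sub>R (q - p) + ((x - p) \<bullet> cross3 n (q - p)) *\<^sub>R (r - p))"
    using \<open>n \<bullet> n \<noteq> 0\<close> by (metis scaleR_scaleR scaleR_one left_inverse)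
  then have "x - p = s *\<^sub>R (q - p) + t *\<^sub>R (r - p)"
    unfolding s_def t_def by (simp add: scaleR_add_right divide_inverse_commute)
  then have "x = (1 - s - t) *\<^sub>R p + s *\<^sub>R q + t *\<^sub>R r"
    by (simp add: algebra_simps)
  then show "x \<in> affine hull {p, q, r}"
    unfolding affine_hull_3 by (intro CollectI exI[of _ "1 - s - t"] exI[of _ s] exI[of _ t]) auto
qed

lemma closest_point_affine_hull_3:
  fixes p q r x :: "real^3"
  defines "n \<equiv> cross3 (q - p) (r - p)"
  assumes nz: "n \<noteq> 0"
  shows "closest_point (affine hull {p, q, r}) x = x - ((n \<bullet> (x - p)) / (n \<bullet> n)) *\<^sub>R n"
proof -
  define y where "y = x - ((n \<bullet> (x - p)) / (n \<bullet> n)) *\<^sub>R n"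
  have mem: "z \<in> affine hull {p, q, r} \<longleftrightarrow> n \<bullet> (z - p) = 0" for z
    using nz unfolding n_def by (rule mem_affine_hull_3_iff_cross3)
  have "n \<bullet> n \<noteq> 0"
    using nz by simp
  then have "n \<bullet> (y - p) = 0"
    unfolding y_def by (simp add: inner_diff_right)
  have "dist x y \<le> dist x z" if "z \<in> affine hull {p, q, r}" for z
  proof -
    have "n \<bullet> (y - z) = n \<bullet> (y - p) - n \<bullet> (z - p)"
      by (simp add: inner_diff_right)
    also have "\<dots> = 0"
      using \<open>n \<bullet> (y - p) = 0\<close> mem that by simp
    finally have "orthogonal (x - y) (y - z)"
      unfolding y_def by (simp add: orthogonal_def)
    then have "(norm (x - z))\<^sup>2 = (norm (x - y))\<^sup>2 + (norm (y - z))\<^sup>2"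
      using norm_add_Pythagorean[of "x - y" "y - z"] by simp
    then have "(norm (x - y))\<^sup>2 \<le> (norm (x - z))\<^sup>2"
      by simp
    then show ?thesis
      unfolding dist_norm by (rule power2_le_imp_le) simp
  qed
  then have "y = closest_point (affine hull {p, q, r}) x"
    using mem \<open>n \<bullet> (y - p) = 0\<close>
    by (intro closest_point_unique) (simp_all add: affine_imp_convex)
  then show ?thesis
    unfolding y_def ..
qed

lemma infdist_eq_dist_closest_point:
  "closed S \<Longrightarrow> S \<noteq> {} \<Longrightarrow> infdist x S = dist x (closest_point S x)"
  by (simp add: infdist_eq_setdist setdist_closest_point)

lemma hexagon_odd_vertices_same_offset:
  fixes b :: "nat \<Rightarrow> real^3"
  defines "P \<equiv> affine hull {b 0, b 2, b 4}"
  assumes "oriented_area_zero 6 b" and "\<not> collinear {b 0, b 2, b 4}" and "j \<in> {1, 3, 5}"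
  shows "b j - closest_point P (b j) = b 1 - closest_point P (b 1)"
proof -
  define n where "n = cross3 (b 2 - b 0) (b 4 - b 0)"
  have "n \<noteq> 0"
    using assms(3) unfolding n_def cross3_diff_eq_0_iff_collinear .
  then have "b k - closest_point P (b k) = ((n \<bullet> (b k - b 0)) / (n \<bullet> n)) *\<^sub>R n" for k
    using closest_point_affine_hull_3[where p = "b 0" and q = "b 2" and r = "b 4" and x = "b k"]
    unfolding P_def n_def by simp
  then show ?thesis
    using hexagon_odd_vertices_same_height[OF assms(2,4)] unfolding n_def by simp
qed

lemma oriented_area_zero_project_odd_vertices:
  fixes b :: "nat \<Rightarrow> real^3"
  defines "P \<equiv> affine hull {b 0, b 2, b 4}"
  assumes "oriented_area_zero 6 b" and "\<not> collinear {b 0, b 2, b 4}"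
  shows "oriented_area_zero 6 (\<lambda>i. if even i then b i else closest_point P (b i))"
proof -
  define m where "m = b 1 - closest_point P (b 1)"
  have "(if even i then b i else closest_point P (b i)) = (if even i then b i else b i - m)"
    if "i < 6" for i
  proof -
    have "closest_point P (b j) = b j - m" if "j \<in> {1, 3, 5}" for j
      unfolding m_def P_def hexagon_odd_vertices_same_offset[OF assms(2,3) that, symmetric]
      by simp
    moreover have "odd i \<Longrightarrow> i \<in> {1, 3, 5}"
      using that by (simp only: insert_iff empty_iff) presburger
    ultimately show ?thesis
      by simp
  qed
  then have "oriented_area_zero 6 (\<lambda>i. if even i then b i else closest_point P (b i))
      \<longleftrightarrow> oriented_area_zero 6 (\<lambda>i. if even i then b i else b i - m)"
    by (rule oriented_area_zero_cong)
  then show ?thesis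
    using assms(2) oriented_area_zero_6_shift_odd[of b m] by simp
qed

theorem theorem5p3:
  fixes A u :: "nat \<Rightarrow> real^3" and Og :: "real^3"
  defines "B \<equiv> derived_hexagon Og u"
  defines "\<Pi>1 \<equiv> affine hull {B 0, B 2, B 4}"
  defines "nv \<equiv> cross3 (B 2 - B 0) (B 4 - B 0)"
  assumes gen: "generic_hexagon A"
    and reg: "regular_hexagon A"
    and sup: "support_system A u"
    and ncol: "\<not> collinear {B 0, B 2, B 4}"
  shows "((\<forall>j\<in>{1,3,5::nat}. nv \<bullet> (B j - B 0) > 0) \<or>
          (\<forall>j\<in>{1,3,5::nat}. nv \<bullet> (B j - B 0) < 0) \<or>
          (\<forall>j\<in>{1,3,5::nat}. B j \<in> \<Pi>1))
       \<and> infdist (B 1) \<Pi>1 = infdist (B 3) \<Pi>1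
       \<and> infdist (B 3) \<Pi>1 = infdist (B 5) \<Pi>1
       \<and> (\<exists>\<Pi>2 c. \<Pi>2 = (\<lambda>x. x + c) ` \<Pi>1 \<and> {B 1, B 3, B 5} \<subseteq> \<Pi>2)
       \<and> oriented_area_zero 6
           (\<lambda>i. if even i then B i else closest_point \<Pi>1 (B i))"
proof -
  have area: "oriented_area_zero 6 B"
    unfolding B_def by (rule derived_hexagon_oriented_area_zero[OF sup])
  define d where "d = nv \<bullet> (B 1 - B 0)"
  have height: "nv \<bullet> (B j - B 0) = d" if "j \<in> {1, 3, 5}" for j
    using hexagon_odd_vertices_same_height[OF area that] unfolding nv_def d_def .
  have mem: "x \<in> \<Pi>1 \<longleftrightarrow> nv \<bullet> (x - B 0) = 0" for x
    using ncol unfolding \<Pi>1_def nv_def cross3_diff_eq_0_iff_collinear[symmetric]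
    by (rule mem_affine_hull_3_iff_cross3)
  define m where "m = B 1 - closest_point \<Pi>1 (B 1)"
  have dist: "infdist (B j) \<Pi>1 = norm m" if "j \<in> {1, 3, 5}" for j
  proof -
    have "infdist (B j) \<Pi>1 = norm (B j - closest_point \<Pi>1 (B j))"
      using infdist_eq_dist_closest_point[of \<Pi>1] unfolding \<Pi>1_def by (simp add: dist_norm hull_inc)
    then show ?thesis
      using hexagon_odd_vertices_same_offset[OF area ncol that] unfolding \<Pi>1_def m_def by simp
  qed
  have "B j \<in> (\<lambda>x. x + (B 1 - B 0)) ` \<Pi>1" if "j \<in> {1, 3, 5}" for j
    by (rule rev_image_eqI[of "B j - (B 1 - B 0)"])
      (use height[OF that] in \<open>simp_all add: mem inner_diff_right d_def\<close>)
  then have parallel: "\<exists>\<Pi>2 c. \<Pi>2 = (\<lambda>x. x + c) ` \<Pi>1 \<and> {B 1, B 3, B 5} \<subseteq> \<Pi>2"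
    by (intro exI[of _ "(\<lambda>x. x + (B 1 - B 0)) ` \<Pi>1"] exI[of _ "B 1 - B 0"]) simp
  have side: "(\<forall>j\<in>{1,3,5::nat}. nv \<bullet> (B j - B 0) > 0) \<or>
      (\<forall>j\<in>{1,3,5::nat}. nv \<bullet> (B j - B 0) < 0) \<or> (\<forall>j\<in>{1,3,5::nat}. B j \<in> \<Pi>1)"
    using height by (cases d "0::real" rule: linorder_cases) (simp_all add: mem)
  have "oriented_area_zero 6 (\<lambda>i. if even i then B i else closest_point \<Pi>1 (B i))"
    unfolding \<Pi>1_def by (rule oriented_area_zero_project_odd_vertices[OF area ncol])
  then show ?thesis
    using side parallel dist[of 1] dist[of 3] dist[of 5] by simp
qed

end
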